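(* Fix a level $\ell$ with $SS_\ell>0$ and an integer shift $G$, let $B=2^b$, and write $W_\ell 2^G=q_\ell+f_\ell$ with $q_\ell=\lfloor W_\ell 2^G\rfloor$ and $f_\ell\in[0,1)$ (so $A_\ell(G)=q_\ell+1$). Conditioned on an outer iteration of the inter-level sampler reaching the boundary case $x=A_\ell(G)$ at level $\ell$, the refinement loop accepts level $\ell$ with probability exactly $f_\ell$ and abandons the outer iteration (restarting the procedure) with probability exactly $1-f_\ell$.
   Context: Fix an integer $b\ge 2$. There is a set $\mathcal L$ of $N$ levels, which are consecutive integers. Each level $\ell$ holds a finite (possibly empty) multiset of normalized significands, each an integer in $[2^{b-1},2^b)$. Let $z$ be the total number of stored significands over all levels; assume $z<2^b$. For each level, $SS_\ell$ is the sum of its significands (so $SS_\ell=0$ iff the level is empty); set $SS_\ell=0$ for integers $\ell\notin\mathcal L$. The level weight is $W_\ell=SS_\ell2^\ell$. For an integer global shift $G$, $A_\ell(G)=\lfloor W_\ell2^G\rfloor+1$ if $SS_\ell>0$ and $A_\ell(G)=0$ if $SS_\ell=0$; $A(G)=\sum_\ell A_\ell(G)$ and $M(G)=\sum_\ell W_\ell2^G$. The configuration is nonempty if $z\ge1$. Inter-level sampler (Algorithm 1), with shift $G$ and $A=A(G)$: it performs independent outer iterations. In an outer iteration, draw $x$ uniformly from $\{1,\dots,A\}$ and scan the levels in decreasing order starting from the largest nonempty level. At the current level $\ell$: if $x<A_\ell(G)$, return $\ell$; if $x=A_\ell(G)$, run the refinement loop for $m=1,2,\dots$: draw $r$ uniformly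 from $\{0,\dots,2^b-1\}$ independently, let $t=\lfloor SS_\ell 2^{\ell+G+mb}\rfloor \bmod 2^b$; if $r<t$ return $\ell$; else if $r>t$ or $\ell+G+mb\ge 0$, abandon this outer iteration and start a new one; otherwise continue with $m+1$. If $x>A_\ell(G)$, set $x\leftarrow x-A_\ell(G)$ and move to the next lower level. *)

theory Defs
  imports "HOL-Probability.Probability"
begin

text \<open>Refinement loop of the inter-level sampler (Algorithm 1) at level l with
  level significand sum SS, global shift G and precision b, started at round m.
  Result True = accept level l, False = abandon the outer iteration.\<close>

partial_function (spmf) refine :: "nat \<Rightarrow> nat \<Rightarrow> int \<Rightarrow> int \<Rightarrow> nat \<Rightarrow> bool spmf" where
  "refine b SS l G m =
     do {
       r \<leftarrow> spmf_of_set {0..<(2::nat)^b};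
       let t = nat (\<lfloor>real SS * 2 powr real_of_int (l + G + int m * int b)\<rfloor> mod 2^b);
       if r < t then return_spmf True
       else if r > t \<or> l + G + int m * int b \<ge> 0 then return_spmf False
       else refine b SS l G (Suc m)
     }"

definition level_weight :: "nat \<Rightarrow> int \<Rightarrow> real" where
  "level_weight SS l = real SS * 2 powr real_of_int l"

end

theory Submission
  imports Defs
begin

text \<open>Write \<open>y\<^sub>m = SS\<^sub>l 2\<^bsup>l+G+mb\<^esup>\<close>, so that \<open>y\<^sub>1 / 2\<^sup>b = W\<^sub>l 2\<^sup>G\<close> and \<open>y\<^sub>m\<close> is \<open>2\<^sup>b y\<^sub>m\<^sub>-\<^sub>1\<close>.
  Round \<open>m\<close> of the refinement loop compares a uniform \<open>b\<close>-bit number \<open>r\<close> with the digit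
  \<open>t\<^sub>m = \<lfloor>y\<^sub>m\<rfloor> mod 2\<^sup>b\<close>, which is the \<open>m\<close>-th base-\<open>2\<^sup>b\<close> digit of \<open>frac (W\<^sub>l 2\<^sup>G)\<close>: it accepts
  if \<open>r < t\<^sub>m\<close> and recurses on a tie. Hence the acceptance probability \<open>p\<^sub>m\<close> satisfies
  \<open>p\<^sub>m = (t\<^sub>m + p\<^sub>m\<^sub>+\<^sub>1) / 2\<^sup>b\<close>, which is exactly the recurrence
  \<open>frac (y\<^sub>m / 2\<^sup>b) = (t\<^sub>m + frac y\<^sub>m) / 2\<^sup>b\<close>; once \<open>y\<^sub>m\<close> is an integer the loop stops on a tie
  and \<open>frac y\<^sub>m = 0\<close>, so induction on the number of remaining rounds gives \<open>p\<^sub>1 = frac (W\<^sub>l 2\<^sup>G)\<close>.\<close>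

lemma sum_atLeastLessThan_trichotomy:
  fixes a c d :: "'a::comm_semiring_1"
  assumes "t < B"
  shows "(\<Sum>r\<in>{0..<B}. if r < t then a else if t < r then c else d)
           = of_nat t * a + d + of_nat (B - 1 - t) * c"
proof -
  let ?g = "\<lambda>r. if r < t then a else if t < r then c else d"
  have split: "{0..<B} = {0..<t} \<union> ({t} \<union> {t<..<B})" using assms by auto
  have "sum ?g {0..<B} = sum ?g {0..<t} + (sum ?g {t} + sum ?g {t<..<B})"
    unfolding split by (subst sum.union_disjoint; auto)+
  also have "sum ?g {t<..<B} = sum (\<lambda>_. c) {t<..<B}" by (rule sum.cong) auto
  finally show ?thesis by (simp add: add.assoc)
qed

lemma frac_divide_int:
  fixes y :: real and d :: int
  assumes "d > 0"
  shows "frac (y / d) = (of_int (\<lfloor>y\<rfloor> mod d) + frac y) / d"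
proof -
  have "\<lfloor>y / d\<rfloor> = \<lfloor>y\<rfloor> div d"
    using assms by (simp add: floor_divide_real_eq_div)
  moreover have "real_of_int (\<lfloor>y\<rfloor> mod d) = \<lfloor>y\<rfloor> - d * (\<lfloor>y\<rfloor> div d)"
    by (simp add: minus_mult_div_eq_mod[symmetric])
  ultimately show ?thesis
    using assms by (simp add: frac_def field_simps)
qed

lemma spmf_refine_unfold:
  fixes b SS m :: nat and l G :: int
  defines "e \<equiv> l + G + int m * int b"
    and "t \<equiv> nat (\<lfloor>real SS * 2 powr real_of_int (l + G + int m * int b)\<rfloor> mod 2^b)"
  shows "spmf (refine b SS l G m) True
           = (real t + (if e \<ge> 0 then 0 else spmf (refine b SS l G (Suc m)) True)) / 2^b"
    and "spmf (refine b SS l G m) False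
           = (real (2^b - 1 - t) + (if e \<ge> 0 then 1 else spmf (refine b SS l G (Suc m)) False)) / 2^b"
proof -
  let ?R = "refine b SS l G (Suc m)"
  have t_less: "t < 2^b" unfolding t_def by (subst nat_less_iff) simp_all
  have refine_eq: "refine b SS l G m = spmf_of_set {0..<(2::nat)^b} \<bind> (\<lambda>r.
          if r < t then return_spmf True
          else if r > t \<or> e \<ge> 0 then return_spmf False
          else ?R)"
    unfolding t_def e_def by (subst refine.simps) (simp only: Let_def)
  have unfold: "spmf (refine b SS l G m) v
      = (\<Sum>r\<in>{0..<(2::nat)^b}. if r < t then spmf (return_spmf True) v
           else if t < r then spmf (return_spmf False) v
           else if e \<ge> 0 then spmf (return_spmf False) v else spmf ?R v) / 2^b" for v
    unfolding refine_eq spmf_bind integral_spmf_of_set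
    by (intro arg_cong2[where f="(/)"] sum.cong) auto
  show "spmf (refine b SS l G m) True
          = (real t + (if e \<ge> 0 then 0 else spmf ?R True)) / 2^b"
    by (simp add: unfold sum_atLeastLessThan_trichotomy[OF t_less])
  show "spmf (refine b SS l G m) False
          = (real (2^b - 1 - t) + (if e \<ge> 0 then 1 else spmf ?R False)) / 2^b"
    by (simp add: unfold sum_atLeastLessThan_trichotomy[OF t_less])
qed

lemma spmf_refine:
  fixes b SS m :: nat and l G :: int
  assumes "b > 0"
  shows "spmf (refine b SS l G m) True
           = frac (real SS * 2 powr real_of_int (l + G + int m * int b) / 2^b)
       \<and> spmf (refine b SS l G m) False
           = 1 - frac (real SS * 2 powr real_of_int (l + G + int m * int b) / 2^b)"
proof (induction "nat (- (l + G + int m * int b))" arbitrary: m rule: less_induct)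
  case less
  define e where "e = l + G + int m * int b"
  define y where "y = real SS * 2 powr real_of_int e"
  define t where "t = nat (\<lfloor>y\<rfloor> mod 2^b)"
  have t_less: "t < 2^b" unfolding t_def by (subst nat_less_iff) simp_all
  have frac_digits: "frac (y / 2^b) = (real t + frac y) / 2^b"
    using frac_divide_int[of "2^b" y] unfolding t_def by simp
  have complement: "real (2^b - 1 - t) = 2^b - 1 - real t"
    using t_less by (simp add: of_nat_diff)
  note step = spmf_refine_unfold[of b SS l G m, folded e_def, folded y_def, folded t_def]
  have "spmf (refine b SS l G m) True = frac (y / 2^b)
      \<and> spmf (refine b SS l G m) False = 1 - frac (y / 2^b)"
  proof (cases "e \<ge> 0")
    case True
    then have "y = of_int (int SS * 2 ^ nat e)"
      unfolding y_def by (simp add: powr_realpow[symmetric])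
    then have "frac y = 0" by simp
    then have "frac (y / 2^b) = real t / 2^b"
      by (simp add: frac_digits)
    moreover have "spmf (refine b SS l G m) True = real t / 2^b"
      and "spmf (refine b SS l G m) False = 1 - real t / 2^b"
      unfolding step complement using True by (simp_all add: diff_divide_distrib)
    ultimately show ?thesis by simp
  next
    case False
    have "real SS * 2 powr real_of_int (l + G + int (Suc m) * int b) / 2^b = y"
      unfolding y_def e_def by (simp add: algebra_simps powr_add powr_realpow)
    moreover have "nat (- (l + G + int (Suc m) * int b)) < nat (- e)"
      using False assms unfolding e_def by (simp add: algebra_simps)
    ultimately have "spmf (refine b SS l G (Suc m)) True = frac y"
      and "spmf (refine b SS l G (Suc m)) False = 1 - frac y"
      using less.hyps[of "Suc m"] unfolding e_def by auto
    then have "spmf (refine b SS l G m) True = (real t + frac y) / 2^b"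
      and "spmf (refine b SS l G m) False = (real (2^b - 1 - t) + (1 - frac y)) / 2^b"
      using False by (simp_all only: step if_False)
    then show ?thesis
      unfolding frac_digits complement by (simp add: field_simps)
  qed
  then show ?case
    unfolding y_def e_def .
qed

theorem mainTheorem1:
  fixes b :: nat and S :: "nat multiset" and l G :: int
  assumes "b \<ge> 2"
    and "\<forall>s\<in>#S. 2^(b-1) \<le> s \<and> s < 2^b"
    and "size S < 2^b"
    and "sum_mset S > 0"
  shows "spmf (refine b (sum_mset S) l G 1) True
           = frac (level_weight (sum_mset S) l * 2 powr real_of_int G)
       \<and> spmf (refine b (sum_mset S) l G 1) False
           = 1 - frac (level_weight (sum_mset S) l * 2 powr real_of_int G)"
proof -
  have "real (sum_mset S) * 2 powr real_of_int (l + G + int 1 * int b) / 2^b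
          = level_weight (sum_mset S) l * 2 powr real_of_int G"
    unfolding level_weight_def by (simp add: powr_add powr_realpow)
  with spmf_refine[of b "sum_mset S" l G 1] assms(1) show ?thesis by simp
qed

end
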